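(* Let $G$ be a graph, $\varphi$ a $4$-colouring of $G$, and $v$ a vertex of $G$ of degree $3$ that is $\varphi$-frozen. Then every neighbour of $v$ is $\varphi$-frozen.
   Context: Colourings are proper $4$-colourings (colours $\{1,2,3,4\}$); a recolouring sequence is a sequence of proper $4$-colourings in which consecutive ones differ on exactly one vertex. A vertex $v$ is $\varphi$-frozen if $\gamma(v)=\varphi(v)$ for every $4$-colouring $\gamma$ obtainable from $\varphi$ by a recolouring sequence. *)

theory Defs
  imports Main
begin

definition graph :: "'a set \<Rightarrow> ('a \<Rightarrow> 'a \<Rightarrow> bool) \<Rightarrow> bool" where
  "graph V E \<longleftrightarrow> finite V \<and> (\<forall>x y. E x y \<longrightarrow> x \<in> V \<and> y \<in> V)
     \<and> (\<forall>x y. E x y \<longrightarrow> E y x) \<and> (\<forall>x. \<not> E x x)"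

definition neighbours :: "'a set \<Rightarrow> ('a \<Rightarrow> 'a \<Rightarrow> bool) \<Rightarrow> 'a \<Rightarrow> 'a set" where
  "neighbours V E v = {u \<in> V. E v u}"

definition degree :: "'a set \<Rightarrow> ('a \<Rightarrow> 'a \<Rightarrow> bool) \<Rightarrow> 'a \<Rightarrow> nat" where
  "degree V E v = card (neighbours V E v)"

definition colouring4 :: "'a set \<Rightarrow> ('a \<Rightarrow> 'a \<Rightarrow> bool) \<Rightarrow> ('a \<Rightarrow> nat) \<Rightarrow> bool" where
  "colouring4 V E c \<longleftrightarrow> (\<forall>x\<in>V. c x \<in> {1,2,3,4}) \<and> (\<forall>x y. E x y \<longrightarrow> c x \<noteq> c y)"

definition recolour_step :: "'a set \<Rightarrow> ('a \<Rightarrow> 'a \<Rightarrow> bool) \<Rightarrow> ('a \<Rightarrow> nat) \<Rightarrow> ('a \<Rightarrow> nat) \<Rightarrow> bool" where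
  "recolour_step V E c d \<longleftrightarrow> colouring4 V E c \<and> colouring4 V E d
     \<and> card {x \<in> V. c x \<noteq> d x} = 1"

(* d is obtainable from c by a recolouring sequence (possibly of length zero);
   colourings are compared on V only *)
definition reachable :: "'a set \<Rightarrow> ('a \<Rightarrow> 'a \<Rightarrow> bool) \<Rightarrow> ('a \<Rightarrow> nat) \<Rightarrow> ('a \<Rightarrow> nat) \<Rightarrow> bool" where
  "reachable V E c d \<longleftrightarrow> (recolour_step V E)\<^sup>*\<^sup>* c d"

definition frozen :: "'a set \<Rightarrow> ('a \<Rightarrow> 'a \<Rightarrow> bool) \<Rightarrow> ('a \<Rightarrow> nat) \<Rightarrow> 'a \<Rightarrow> bool" where
  "frozen V E c v \<longleftrightarrow> (\<forall>d. reachable V E c d \<longrightarrow> d v = c v)"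

end

theory Submission
  imports Defs
begin

(* If v is frozen, every colour other than its own occurs on a neighbour of v, in every
   colouring reachable from the given one. With three neighbours this makes the colouring a
   bijection from the neighbourhood onto the three other colours. A single recolouring step
   changes at most one neighbour, and a bijection onto a fixed three-element set that is known
   on two of the three neighbours is determined on the third; so no step can change a
   neighbour at all. *)

lemma neighbours_subset: "neighbours V E v \<subseteq> V"
  unfolding neighbours_def by blast

lemma finite_neighbours: "graph V E \<Longrightarrow> finite (neighbours V E v)"
  unfolding graph_def neighbours_def by simp

lemma recolour_step_fun_upd:
  assumes "graph V E" "colouring4 V E c" "x \<in> V" "k \<in> {1,2,3,4}" "k \<noteq> c x"
    and "k \<notin> c ` neighbours V E x"
  shows "recolour_step V E c (c(x := k))"
proof -
  have "(c(x := k)) a \<noteq> (c(x := k)) b" if "E a b" for a b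
  proof -
    have "E b a" "a \<noteq> b" "a \<in> V" "b \<in> V"
      using assms(1) that unfolding graph_def by blast+
    with that assms(2,6) show ?thesis
      unfolding colouring4_def neighbours_def by auto
  qed
  with assms(2,4) have "colouring4 V E (c(x := k))"
    unfolding colouring4_def by simp
  moreover have "{y \<in> V. c y \<noteq> (c(x := k)) y} = {x}"
    using assms(3,5) by auto
  ultimately show ?thesis
    using assms(2) unfolding recolour_step_def by simp
qed

lemma recolour_step_agree_off_point:
  assumes "recolour_step V E c d"
  shows "\<exists>x. \<forall>y \<in> V. y \<noteq> x \<longrightarrow> d y = c y"
proof -
  have "card {y \<in> V. c y \<noteq> d y} = 1"
    using assms unfolding recolour_step_def by blast
  then obtain x where "{y \<in> V. c y \<noteq> d y} = {x}"
    by (rule card_1_singletonE)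
  then have "\<forall>y \<in> V. y \<noteq> x \<longrightarrow> d y = c y"
    by (metis (mono_tags, lifting) mem_Collect_eq singletonD)
  then show ?thesis ..
qed

lemma reachable_colouring4:
  "reachable V E c d \<Longrightarrow> colouring4 V E c \<Longrightarrow> colouring4 V E d"
  unfolding reachable_def
  by (induction rule: rtranclp_induct) (auto simp: recolour_step_def)

lemma frozen_reachable:
  assumes "frozen V E c v" "reachable V E c d"
  shows "frozen V E d v" "d v = c v"
proof -
  show "d v = c v"
    using assms unfolding frozen_def by blast
  have "reachable V E c e" if "reachable V E d e" for e
    using assms(2) that rtranclp_trans unfolding reachable_def by metis
  with assms(1) \<open>d v = c v\<close> show "frozen V E d v"
    unfolding frozen_def by auto
qed

lemma frozen_other_colours_on_neighbours:
  assumes "graph V E" "colouring4 V E c" "v \<in> V" "frozen V E c v"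
  shows "{1,2,3,4} - {c v} \<subseteq> c ` neighbours V E v"
proof
  fix k assume k: "k \<in> {1,2,3,4} - {c v}"
  show "k \<in> c ` neighbours V E v"
  proof (rule ccontr)
    assume "k \<notin> c ` neighbours V E v"
    with assms k have "recolour_step V E c (c(v := k))"
      by (intro recolour_step_fun_upd) auto
    then have "reachable V E c (c(v := k))"
      unfolding reachable_def by blast
    with assms(4) have "(c(v := k)) v = c v"
      unfolding frozen_def by blast
    with k show False by simp
  qed
qed

lemma frozen_degree3_bij_betw_neighbours:
  assumes "graph V E" "colouring4 V E c" "v \<in> V" "degree V E v = 3" "frozen V E c v"
  shows "bij_betw c (neighbours V E v) ({1,2,3,4} - {c v})"
proof -
  let ?N = "neighbours V E v" and ?C = "{1,2,3,4} - {c v}"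
  have "c ` ?N \<subseteq> ?C"
    using assms(2) neighbours_subset unfolding colouring4_def neighbours_def by blast
  with frozen_other_colours_on_neighbours[OF assms(1,2,3,5)]
  have image: "c ` ?N = ?C" by blast
  have "card ?C = 3"
    using assms(2,3) unfolding colouring4_def by auto
  with image assms(4) have "card (c ` ?N) = card ?N"
    unfolding degree_def by simp
  then have "inj_on c ?N"
    by (rule eq_card_imp_inj_on[OF finite_neighbours[OF assms(1)]])
  with image show ?thesis
    unfolding bij_betw_def by blast
qed

lemma bij_betw_agree_off_point:
  assumes f: "bij_betw f A B" and g: "bij_betw g A B"
    and agree: "\<And>a. a \<in> A \<Longrightarrow> a \<noteq> x \<Longrightarrow> g a = f a"
    and "a \<in> A"
  shows "g a = f a"
proof (cases "a = x")
  case True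
  have "g x \<in> f ` A"
    using f g \<open>a \<in> A\<close> True unfolding bij_betw_def by blast
  then obtain a' where a': "a' \<in> A" "g x = f a'" by blast
  have "a' = x"
  proof (rule ccontr)
    assume "a' \<noteq> x"
    with a' agree have "g x = g a'" by simp
    with g a' \<open>a \<in> A\<close> True \<open>a' \<noteq> x\<close> show False
      unfolding bij_betw_def inj_on_def by blast
  qed
  with a' True show ?thesis by simp
qed (use agree \<open>a \<in> A\<close> in blast)

lemma reachable_fixes_neighbours_of_frozen_degree3:
  assumes "graph V E" "colouring4 V E \<phi>" "v \<in> V" "degree V E v = 3" "frozen V E \<phi> v"
    and "reachable V E \<phi> c"
  shows "\<forall>w \<in> neighbours V E v. c w = \<phi> w"
  using assms(6) unfolding reachable_def
proof (induction rule: rtranclp_induct)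
  case (step c c')
  have bij: "bij_betw d (neighbours V E v) ({1,2,3,4} - {\<phi> v})"
    if "reachable V E \<phi> d" for d
  proof -
    have "colouring4 V E d" "frozen V E d v" "d v = \<phi> v"
      using reachable_colouring4[OF that assms(2)] frozen_reachable[OF assms(5) that] by auto
    with frozen_degree3_bij_betw_neighbours[OF assms(1) _ assms(3,4)] show ?thesis
      by metis
  qed
  have reach: "reachable V E \<phi> c" "reachable V E \<phi> c'"
    using step.hyps unfolding reachable_def by auto
  obtain x where "\<forall>y \<in> V. y \<noteq> x \<longrightarrow> c' y = c y"
    using recolour_step_agree_off_point[OF step.hyps(2)] by blast
  then have "c' w = c w" if "w \<in> neighbours V E v" for w
    using bij_betw_agree_off_point[OF bij[OF reach(1)] bij[OF reach(2)]] that neighbours_subset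
    by (meson subsetD)
  with step.IH show ?case by simp
qed simp

theorem lemma7:
  fixes V :: "'a set" and E :: "'a \<Rightarrow> 'a \<Rightarrow> bool" and \<phi> :: "'a \<Rightarrow> nat" and v :: 'a
  assumes "graph V E"
    and "colouring4 V E \<phi>"
    and "v \<in> V"
    and "degree V E v = 3"
    and "frozen V E \<phi> v"
  shows "\<forall>u \<in> neighbours V E v. frozen V E \<phi> u"
  using reachable_fixes_neighbours_of_frozen_degree3[OF assms] unfolding frozen_def by blast

end
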